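(* Let $(t_k)_{k\in\mathbb{N}}$ be a strictly increasing sequence with $t_1=\pi/4$ and $t_k\to\pi/2$, let $v_k=(\cos t_k,\sin t_k)\in\mathbb{R}^2$, $a=(-2,2)$, $b=(2,2)$, and $C_1'=\{a\}$, $C_2'=\{b\}$, $C_3'=\overline{\mathrm{co}}\{v_k:k\in\mathbb{N}\}$. Let $k\in\mathbb{N}$ and $d_k=\frac{v_{k+1}-v_k}{\|v_{k+1}-v_k\|}$. Then for every point $c$ of the half-open segment $[v_k,v_{k+1})=\{(1-s)v_k+sv_{k+1}: s\in[0,1)\}$, the number $$\varepsilon(c)=1+\frac{\langle b-c,d_k\rangle}{\langle a-c,d_k\rangle}$$ is well defined and lies in $(0,1)$, and the triple $(a,b,c)$ is the support of an $\varepsilon(c)$-cycle $(u_1',u_2',u_3')$ for $C_1',C_2',C_3'$.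
   Context: For a nonempty closed convex set $C\subseteq\mathbb{R}^2$, $\Pi_C(u)$ denotes the Euclidean projection of $u$ onto $C$. For three nonempty closed convex sets $D_1,D_2,D_3$ and $\varepsilon\in(0,1]$, an $\varepsilon$-cycle is a triple $(u_1,u_2,u_3)$ with $u_1=u_3+\varepsilon(\Pi_{D_1}(u_3)-u_3)$, $u_2=u_1+\varepsilon(\Pi_{D_2}(u_1)-u_1)$, $u_3=u_2+\varepsilon(\Pi_{D_3}(u_2)-u_2)$; its support is the triple $(\Pi_{D_1}(u_3),\Pi_{D_2}(u_1),\Pi_{D_3}(u_2))$. $\overline{\mathrm{co}}$ denotes closed convex hull and $\langle\cdot,\cdot\rangle$ the Euclidean inner product. *)

theory Defs
  imports "HOL-Analysis.Analysis"
begin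

definition eps_cycle ::
  "(real \<times> real) set \<Rightarrow> (real \<times> real) set \<Rightarrow> (real \<times> real) set \<Rightarrow> real
    \<Rightarrow> (real \<times> real) \<Rightarrow> (real \<times> real) \<Rightarrow> (real \<times> real) \<Rightarrow> bool" where
  "eps_cycle D1 D2 D3 eps u1 u2 u3 \<longleftrightarrow>
     0 < eps \<and> eps \<le> 1 \<and>
     u1 = u3 + eps *\<^sub>R (closest_point D1 u3 - u3) \<and>
     u2 = u1 + eps *\<^sub>R (closest_point D2 u1 - u1) \<and>
     u3 = u2 + eps *\<^sub>R (closest_point D3 u2 - u2)"

definition cycle_support ::
  "(real \<times> real) set \<Rightarrow> (real \<times> real) set \<Rightarrow> (real \<times> real) set
    \<Rightarrow> (real \<times> real) \<Rightarrow> (real \<times> real) \<Rightarrow> (real \<times> real)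
    \<Rightarrow> (real \<times> real) \<times> (real \<times> real) \<times> (real \<times> real)" where
  "cycle_support D1 D2 D3 u1 u2 u3 =
     (closest_point D1 u3, closest_point D2 u1, closest_point D3 u2)"

end

theory Submission
  imports Defs
begin

text \<open>With \<open>C\<^sub>1 = {a}\<close> and \<open>C\<^sub>2 = {b}\<close> the first two projections are constant, so an
  \<open>\<epsilon>\<close>-cycle with support \<open>(a, b, c)\<close> is the fixed point of the composition of the affine maps
  \<open>x \<mapsto> (1 - \<epsilon>) x + \<epsilon> p\<close>, and for it \<open>u\<^sub>2 - c\<close> is a positive multiple of
  \<open>z = (1 - \<epsilon>)(a - c) + (b - c)\<close>. Hence it suffices that \<open>z\<close> lies in the normal cone of
  \<open>C\<^sub>3\<close> at \<open>c\<close>. Let \<open>n\<close> be the unit vector at the mid-angle of \<open>t\<^sub>k\<close> and \<open>t\<^sub>k\<^sub>+\<^sub>1\<close>: all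
  \<open>v\<^sub>j\<close> lie in the half-plane \<open>\<langle>n, y\<rangle> \<le> \<langle>n, v\<^sub>k\<rangle>\<close> bounded by the line through the chord,
  so it suffices that \<open>z\<close> is a nonnegative multiple of \<open>n\<close>. The value \<open>\<epsilon>(c)\<close> is exactly the
  one making \<open>z\<close> orthogonal to the chord, and the angle bounds \<open>\<pi>/4 \<le> t\<^sub>j < \<pi>/2\<close> give
  \<open>\<langle>z, n\<rangle> \<ge> 0\<close> and \<open>0 < \<epsilon>(c) < 1\<close>.\<close>

lemma closest_point_eq_if_obtuse:
  fixes S :: "'a::{real_inner,heine_borel} set"
  assumes "convex S" "closed S" "x \<in> S" "\<forall>y\<in>S. inner (u - x) (y - x) \<le> 0"
  shows "closest_point S u = x"
proof -
  define p where "p = closest_point S u"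
  have "inner (u - p) (x - p) \<le> 0"
    unfolding p_def using closest_point_dot[OF assms(1-3)] .
  moreover have "inner (u - x) (p - x) \<le> 0"
    unfolding p_def using assms(4) closest_point_in_set[OF assms(2)] assms(3) by blast
  ultimately have "inner (x - p) (x - p) \<le> 0"
    by (simp add: inner_diff_left inner_diff_right inner_commute)
  then show ?thesis
    unfolding p_def by (metis antisym inner_ge_zero inner_eq_zero_iff eq_iff_diff_eq_0)
qed

lemma eps_cycle_with_singletons:
  fixes p1 p2 p3 :: "real \<times> real"
  assumes D3: "convex D3" "closed D3" "p3 \<in> D3"
    and eps: "0 < eps" "eps \<le> 1"
    and normal: "\<forall>y\<in>D3. inner ((1 - eps) *\<^sub>R (p1 - p3) + (p2 - p3)) (y - p3) \<le> 0"
  shows "\<exists>u1 u2 u3. eps_cycle {p1} {p2} D3 eps u1 u2 u3 \<and>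
                    cycle_support {p1} {p2} D3 u1 u2 u3 = (p1, p2, p3)"
proof -
  define q where "q = 1 - eps"
  have q3: "1 - q ^ 3 > 0"
    using eps unfolding q_def by (simp add: power_less_one_iff)
  \<comment> \<open>\<open>u\<^sub>1\<close> is the fixed point of the composition of the three maps \<open>x \<mapsto> q x + \<epsilon> p\<^sub>i\<close>.\<close>
  define u1 where "u1 = (eps / (1 - q ^ 3)) *\<^sub>R (p1 + q *\<^sub>R p3 + q\<^sup>2 *\<^sub>R p2)"
  define u2 where "u2 = q *\<^sub>R u1 + eps *\<^sub>R p2"
  define u3 where "u3 = q *\<^sub>R u2 + eps *\<^sub>R p3"
  have u1: "(1 - q ^ 3) *\<^sub>R u1 = eps *\<^sub>R (p1 + q *\<^sub>R p3 + q\<^sup>2 *\<^sub>R p2)"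
    unfolding u1_def using q3 by simp
  have "q *\<^sub>R u3 + eps *\<^sub>R p1 = q ^ 3 *\<^sub>R u1 + eps *\<^sub>R (p1 + q *\<^sub>R p3 + q\<^sup>2 *\<^sub>R p2)"
    unfolding u3_def u2_def by (simp add: algebra_simps power3_eq_cube power2_eq_square)
  also have "\<dots> = u1"
    unfolding u1[symmetric] by (simp add: algebra_simps)
  finally have closes: "u1 = q *\<^sub>R u3 + eps *\<^sub>R p1" ..
  have "(1 - q ^ 3) *\<^sub>R (u2 - p3) = q *\<^sub>R ((1 - q ^ 3) *\<^sub>R u1) + (1 - q ^ 3) *\<^sub>R (eps *\<^sub>R p2 - p3)"
    unfolding u2_def by (simp add: algebra_simps)
  also have "\<dots> = eps *\<^sub>R ((1 - eps) *\<^sub>R (p1 - p3) + (p2 - p3))"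
    unfolding u1 by (simp add: prod_eq_iff q_def algebra_simps power3_eq_cube power2_eq_square)
  finally have scaled: "(1 - q ^ 3) *\<^sub>R (u2 - p3) = eps *\<^sub>R ((1 - eps) *\<^sub>R (p1 - p3) + (p2 - p3))" .
  have "\<forall>y\<in>D3. (1 - q ^ 3) * inner (u2 - p3) (y - p3) \<le> 0"
  proof
    fix y assume "y \<in> D3"
    have "(1 - q ^ 3) * inner (u2 - p3) (y - p3) = eps * inner ((1 - eps) *\<^sub>R (p1 - p3) + (p2 - p3)) (y - p3)"
      by (simp only: flip: inner_scaleR_left scaled)
    then show "(1 - q ^ 3) * inner (u2 - p3) (y - p3) \<le> 0"
      using normal \<open>y \<in> D3\<close> eps by (simp add: mult_nonneg_nonpos)
  qed
  then have "\<forall>y\<in>D3. inner (u2 - p3) (y - p3) \<le> 0"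
    using q3 by (simp add: mult_le_0_iff)
  then have cp3: "closest_point D3 u2 = p3"
    by (rule closest_point_eq_if_obtuse[OF D3])
  have cp: "closest_point {p} x = p" for p x :: "real \<times> real"
    by (rule closest_point_eq_if_obtuse) auto
  show ?thesis
  proof (intro exI conjI)
    show "eps_cycle {p1} {p2} D3 eps u1 u2 u3"
      unfolding eps_cycle_def cp cp3 using eps closes
      by (simp add: u2_def u3_def q_def algebra_simps)
    show "cycle_support {p1} {p2} D3 u1 u2 u3 = (p1, p2, p3)"
      unfolding cycle_support_def cp cp3 ..
  qed
qed

lemma inner_polar_frame:
  fixes x y :: "real \<times> real"
  shows "inner x y = inner x (cos m, sin m) * inner y (cos m, sin m)
                   + inner x (- sin m, cos m) * inner y (- sin m, cos m)"
proof -
  obtain x1 x2 y1 y2 where xy: "x = (x1, x2)" "y = (y1, y2)" by fastforce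
  have "x1 * y1 + x2 * y2 = (x1 * cos m + x2 * sin m) * (y1 * cos m + y2 * sin m)
                          + (x2 * cos m - x1 * sin m) * (y2 * cos m - y1 * sin m)"
    using sin_cos_squared_add[of m] by algebra
  then show ?thesis unfolding xy by (simp add: algebra_simps)
qed

lemma cos_sin_add_polar_frame:
  "(cos (m + x), sin (m + x)) = cos x *\<^sub>R (cos m, sin m) + sin x *\<^sub>R (- sin m, cos m)"
  by (simp add: cos_add sin_add algebra_simps)

lemma unit_circle_chord_polar_frame:
  fixes p r s :: real
  defines "m \<equiv> (p + r) / 2" and "h \<equiv> (r - p) / 2"
  defines "n \<equiv> (cos m, sin m)" and "d \<equiv> (- sin m, cos m)"
  assumes "0 < sin h"
  shows "(1 / norm ((cos r, sin r) - (cos p, sin p))) *\<^sub>R ((cos r, sin r) - (cos p, sin p)) = d"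
    and "(1 - s) *\<^sub>R (cos p, sin p) + s *\<^sub>R (cos r, sin r) = cos h *\<^sub>R n + ((2 * s - 1) * sin h) *\<^sub>R d"
proof -
  have p: "(cos p, sin p) = cos h *\<^sub>R n - sin h *\<^sub>R d"
    using cos_sin_add_polar_frame[of m "- h"] unfolding n_def d_def m_def h_def by (simp add: field_simps)
  have r: "(cos r, sin r) = cos h *\<^sub>R n + sin h *\<^sub>R d"
    using cos_sin_add_polar_frame[of m h] unfolding n_def d_def m_def h_def by (simp add: field_simps)
  have "norm d = 1" unfolding d_def by (simp add: norm_Pair)
  then show "(1 / norm ((cos r, sin r) - (cos p, sin p))) *\<^sub>R ((cos r, sin r) - (cos p, sin p)) = d"
    unfolding p r using assms(5) by (simp add: algebra_simps flip: scaleR_2)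
  show "(1 - s) *\<^sub>R (cos p, sin p) + s *\<^sub>R (cos r, sin r) = cos h *\<^sub>R n + ((2 * s - 1) * sin h) *\<^sub>R d"
    unfolding p r by (simp add: prod_eq_iff algebra_simps)
qed

lemma strict_mono_on_less_limit:
  fixes t :: "nat \<Rightarrow> real"
  assumes "strict_mono_on {n..} t" "t \<longlonglongrightarrow> L" "n \<le> j"
  shows "t j < L"
proof -
  have "t (Suc j) \<le> L"
    using assms by (intro LIMSEQ_le_const[OF assms(2)] exI[of _ "Suc j"]) (auto intro: strict_mono_on_leD)
  moreover have "t j < t (Suc j)"
    using assms by (intro strict_mono_onD[OF assms(1)]) auto
  ultimately show ?thesis by simp
qed

lemma unit_circle_hull_subset_halfspace:
  assumes "0 \<le> h" "\<And>\<theta>. \<theta> \<in> \<Theta> \<Longrightarrow> h \<le> \<bar>\<theta> - m\<bar> \<and> \<bar>\<theta> - m\<bar> \<le> pi"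
  shows "closure (convex hull ((\<lambda>\<theta>. (cos \<theta>, sin \<theta>)) ` \<Theta>)) \<subseteq> {y. inner (cos m, sin m) y \<le> cos h}"
proof (intro closure_minimal hull_minimal)
  show "(\<lambda>\<theta>. (cos \<theta>, sin \<theta>)) ` \<Theta> \<subseteq> {y. inner (cos m, sin m) y \<le> cos h}"
  proof clarify
    fix \<theta> assume "\<theta> \<in> \<Theta>"
    have "inner (cos m, sin m) (cos \<theta>, sin \<theta>) = cos \<bar>\<theta> - m\<bar>"
      by (simp add: cos_diff algebra_simps)
    also have "\<dots> \<le> cos h"
      using assms(1) assms(2)[OF \<open>\<theta> \<in> \<Theta>\<close>] by (subst cos_mono_le_eq) auto
    finally show "inner (cos m, sin m) (cos \<theta>, sin \<theta>) \<le> cos h" .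
  qed
qed (simp_all add: convex_halfspace_le closed_halfspace_le)

lemma half_arc_sin_bounds:
  assumes "pi / 4 \<le> m - h" "0 < h" "m + h < pi / 2"
  shows "sin h < cos m" "sin h \<le> sin m - cos m" "1 / 2 < sin m"
proof -
  have "sin h < sin (pi / 2 - m)"
    using assms by (subst sin_mono_less_eq) (use pi_gt_zero in linarith)+
  then show "sin h < cos m" by (simp add: sin_cos_eq)
  have "sin h \<le> sin (m - pi / 4)"
    using assms by (subst sin_mono_le_eq) (use pi_gt_zero in linarith)+
  also have "\<dots> = (sin m - cos m) * (sqrt 2 / 2)"
    by (simp add: sin_diff sin_45 cos_45 algebra_simps)
  also have "\<dots> \<le> sin m - cos m"
  proof (rule mult_left_le)
    have "0 < sin h" using assms by (intro sin_gt_zero) (use pi_gt_zero in linarith)+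
    with calculation have "0 < (sin m - cos m) * (sqrt 2 / 2)" by linarith
    then show "0 \<le> sin m - cos m" by (simp add: zero_less_mult_iff)
  qed (use sqrt2_less_2 in simp)
  finally show "sin h \<le> sin m - cos m" .
  have "sin (pi / 6) < sin m"
    using assms by (subst sin_mono_less_eq) (use pi_gt_zero in linarith)+
  then show "1 / 2 < sin m" by (simp add: sin_30)
qed

lemma relaxation_cycle_through_chord:
  fixes m h \<sigma> :: real and c :: "real \<times> real" and C :: "(real \<times> real) set"
  defines "n \<equiv> (cos m, sin m)" and "d \<equiv> (- sin m, cos m)"
    and "a \<equiv> ((-2, 2) :: real \<times> real)" and "b \<equiv> ((2, 2) :: real \<times> real)"
  assumes arc: "pi / 4 \<le> m - h" "0 < h" "m + h < pi / 2"
    and \<sigma>: "- sin h \<le> \<sigma>" "\<sigma> < sin h"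
    and c: "c = cos h *\<^sub>R n + \<sigma> *\<^sub>R d"
    and C: "convex C" "closed C" "c \<in> C" "C \<subseteq> {y. inner n y \<le> cos h}"
  defines "eps \<equiv> 1 + inner (b - c) d / inner (a - c) d"
  shows "0 < inner (a - c) d \<and> 0 < eps \<and> eps < 1 \<and>
         (\<exists>u1 u2 u3. eps_cycle {a} {b} C eps u1 u2 u3 \<and>
                     cycle_support {a} {b} C u1 u2 u3 = (a, b, c))"
proof -
  have sh: "0 < sin h" using arc by (intro sin_gt_zero) (use pi_gt_zero in linarith)+
  note angle_bounds = half_arc_sin_bounds[OF arc]
  have c_n: "inner c n = cos h" and c_d: "inner c d = \<sigma>"
    unfolding c n_def d_def
    by (simp_all add: algebra_simps flip: power2_eq_square) (simp_all flip: distrib_left)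
  define P where "P = 2 * sin m + 2 * cos m - \<sigma>"
  define Q where "Q = 2 * cos m - 2 * sin m - \<sigma>"
  have a_d: "inner (a - c) d = P" and b_d: "inner (b - c) d = Q"
    unfolding P_def Q_def inner_diff_left c_d by (simp_all add: a_def b_def d_def)
  have P: "0 < P" and Q: "Q < 0" and PQ: "0 < P + Q"
    unfolding P_def Q_def using angle_bounds sh \<sigma> by linarith+
  have eps_PQ: "eps = (P + Q) / P" and eps: "0 < eps" "eps < 1"
    unfolding eps_def a_d b_d using P Q PQ by (simp_all add: field_simps)
  define z where "z = (1 - eps) *\<^sub>R (a - c) + (b - c)"
  have z_d: "inner z d = 0"
    unfolding z_def inner_add_left inner_scaleR_left a_d b_d eps_PQ using P by (simp add: field_simps)
  have "inner z n = eps * (2 * sin m + 2 * cos m - cos h) + (1 - eps) * (4 * sin m - 2 * cos h)"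
    unfolding z_def inner_add_left inner_scaleR_left inner_diff_left c_n
    by (simp add: a_def b_def n_def algebra_simps)
  moreover have "0 \<le> 2 * sin m + 2 * cos m - cos h" "0 \<le> 4 * sin m - 2 * cos h"
    using angle_bounds sh cos_le_one[of h] by linarith+
  ultimately have z_n: "0 \<le> inner z n"
    using eps by simp
  have "\<forall>y\<in>C. inner z (y - c) \<le> 0"
  proof
    fix y assume "y \<in> C"
    then have "inner (y - c) n \<le> 0"
      using C(4) c_n by (auto simp: inner_diff_left inner_commute[of n])
    then show "inner z (y - c) \<le> 0"
      using inner_polar_frame[of z "y - c" m] z_d z_n
      by (simp add: n_def d_def mult_nonneg_nonpos)
  qed
  then show ?thesis
    using eps_cycle_with_singletons[OF C(1-3) eps(1) less_imp_le[OF eps(2)]] P a_d eps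
    unfolding z_def by blast
qed

lemma hull_of_monotone_angles_subset_halfspace:
  fixes t :: "nat \<Rightarrow> real"
  assumes mono: "strict_mono_on {1..} t"
    and range: "\<And>j. 1 \<le> j \<Longrightarrow> lo \<le> t j \<and> t j \<le> lo + pi" and k: "1 \<le> k"
  defines "m \<equiv> (t k + t (k + 1)) / 2" and "h \<equiv> (t (k + 1) - t k) / 2"
  shows "closure (convex hull {(cos (t j), sin (t j)) | j. 1 \<le> j})
           \<subseteq> {y. inner (cos m, sin m) y \<le> cos h}"
proof -
  have mh: "m - h = t k" "m + h = t (k + 1)"
    unfolding m_def h_def by (simp_all add: field_simps)
  have "h \<le> \<bar>t j - m\<bar> \<and> \<bar>t j - m\<bar> \<le> pi" if "1 \<le> j" for j
  proof -
    have "t j \<le> t k \<or> t (k + 1) \<le> t j"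
      using strict_mono_on_leD[OF mono, of j k] strict_mono_on_leD[OF mono, of "k + 1" j] that k
      by (cases "j \<le> k") auto
    moreover have "t k \<le> t (k + 1)"
      using strict_mono_on_leD[OF mono, of k "k + 1"] k by simp
    ultimately show ?thesis
      using range[OF that] range[OF k] range[of "k + 1"] mh by (auto simp: abs_if)
  qed
  moreover have "0 \<le> h"
    using strict_mono_on_leD[OF mono, of k "k + 1"] k unfolding h_def by simp
  moreover have "{(cos (t j), sin (t j)) | j. 1 \<le> j} = (\<lambda>\<theta>. (cos \<theta>, sin \<theta>)) ` t ` {1..}"
    by auto
  ultimately show ?thesis
    using unit_circle_hull_subset_halfspace[of h "t ` {1..}" m] by auto
qed

theorem proposition3:
  fixes t :: "nat \<Rightarrow> real" and k :: nat and c :: "real \<times> real"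
  assumes mono: "strict_mono_on {1..} t"
    and t1: "t 1 = pi / 4"
    and lim: "t \<longlonglongrightarrow> pi / 2"
    and k: "k \<ge> 1"
  defines "v \<equiv> (\<lambda>j. (cos (t j), sin (t j)))"
    and "a \<equiv> ((-2, 2) :: real \<times> real)"
    and "b \<equiv> ((2, 2) :: real \<times> real)"
  assumes c: "c \<in> {(1 - s) *\<^sub>R v k + s *\<^sub>R v (k + 1) | s. 0 \<le> s \<and> s < 1}"
  shows "let C1 = {a}; C2 = {b}; C3 = closure (convex hull {v j | j. j \<ge> 1});
             d = (1 / norm (v (k + 1) - v k)) *\<^sub>R (v (k + 1) - v k);
             eps = 1 + inner (b - c) d / inner (a - c) d
         in inner (a - c) d \<noteq> 0 \<and> 0 < eps \<and> eps < 1 \<and>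
            (\<exists>u1 u2 u3. eps_cycle C1 C2 C3 eps u1 u2 u3 \<and>
                        cycle_support C1 C2 C3 u1 u2 u3 = (a, b, c))"
proof -
  have range: "pi / 4 \<le> t j \<and> t j < pi / 2" if "1 \<le> j" for j
    using strict_mono_on_leD[OF mono, of 1 j] strict_mono_on_less_limit[OF mono lim that] t1 that
    by auto
  define m h where "m = (t k + t (k + 1)) / 2" and "h = (t (k + 1) - t k) / 2"
  define C3 where "C3 = closure (convex hull {v j | j. j \<ge> 1})"
  have arc: "pi / 4 \<le> m - h" "0 < h" "m + h < pi / 2"
    using range[OF k] range[of "k + 1"] strict_mono_onD[OF mono, of k "k + 1"] k
    unfolding m_def h_def by (auto simp: field_simps)
  have "0 < sin h" using arc by (intro sin_gt_zero) (use pi_gt_zero in linarith)+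
  note chord = unit_circle_chord_polar_frame[OF this[unfolded h_def], folded m_def h_def]
  obtain s where s: "0 \<le> s" "s < 1" and c_s: "c = (1 - s) *\<^sub>R v k + s *\<^sub>R v (k + 1)"
    using c by blast
  have dir: "(1 / norm (v (k + 1) - v k)) *\<^sub>R (v (k + 1) - v k) = (- sin m, cos m)"
    unfolding v_def by (rule chord(1))
  have c_frame: "c = cos h *\<^sub>R (cos m, sin m) + ((2 * s - 1) * sin h) *\<^sub>R (- sin m, cos m)"
    unfolding c_s v_def chord(2) ..
  have "v k \<in> convex hull {v j | j. j \<ge> 1}" "v (k + 1) \<in> convex hull {v j | j. j \<ge> 1}"
    using k by (auto intro!: hull_inc)
  then have c_C3: "c \<in> C3"
    unfolding C3_def c_s using s by (intro convexD_alt[THEN set_mp[OF closure_subset]]) auto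
  have C3_halfspace: "C3 \<subseteq> {y. inner (cos m, sin m) y \<le> cos h}"
    using hull_of_monotone_angles_subset_halfspace[OF mono _ k, of "pi / 4"] range
    unfolding C3_def v_def m_def h_def by (fastforce simp: less_imp_le)
  have "- sin h \<le> (2 * s - 1) * sin h" "(2 * s - 1) * sin h < sin h"
    using s \<open>0 < sin h\<close> by (simp_all add: algebra_simps)
  from relaxation_cycle_through_chord[OF arc this c_frame _ _ c_C3 C3_halfspace]
  show ?thesis
    unfolding Let_def dir a_def b_def
    by (simp add: C3_def closed_closure convex_closure)
qed

end
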